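(* Let $R$ be a commutative ring, $\mathcal{A}=\{L_1,\dots,L_n\}$ an arrangement of affine lines in $\mathbb{C}^2$ with parallel class decomposition $\mathcal{A}_1\sqcup\dots\sqcup\mathcal{A}_s$, and $\Delta_{tot}:A^*_R(\mathcal{A})\to A^*_R(\mathcal{C}_s)$ the $R$-algebra homomorphism with $e_i\mapsto\tilde e_\alpha$ for $L_i\in\mathcal{A}_\alpha$. Let $\xi=\sum_{i=1}^n a_ie_i\in A^1_R(\mathcal{A})$ and $\eta\in A^1_R(\mathcal{A})_0$. If $\sum_{i=1}^n a_i\in R^\times$ and $\xi\wedge\eta=0$, then $\Delta_{tot}(\eta)=0$.
   Context: The parallel class decomposition partitions $\mathcal{A}$ so that two lines are parallel iff they lie in the same class. $\mathcal{C}_s$ is an arrangement of $s$ distinct lines through the origin in $\mathbb{C}^2$ with Orlik–Solomon generators $\tilde e_1,\dots,\tilde e_s$. The Orlik–Solomon algebra $A^*_R(\mathcal{A})$ of an arrangement $\mathcal{A}=\{L_1,\dots,L_n\}$ of affine lines in $\mathbb{C}^2$ over a commutative ring $R$ is the graded $R$-algebra with $A^0_R=R$, $A^1_R=\bigoplus_{i=1}^n R e_i$, $A^2_R=\bigwedge^2 A^1_R/I$ where $I$ is the $R$-submodule generated by (i) $e_i\wedge e_j$ for each pair of parallel lines $L_i\parallel L_j$ and (ii) $e_i\wedge e_j-e_i\wedge e_k+e_j\wedge e_k$ for each triple of lines with $L_i\cap L_j\cap L_k\neq\emptyset$, and $A^q_R=0$ for $q\ge3$. $A^1_R(\mathcal{A})_0=\{c_1e_1+\dots+c_ne_n\mid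 c_1+\dots+c_n=0\}$. *)

theory Defs
  imports Complex_Main
begin

type_synonym point = "complex \<times> complex"

definition affine_line :: "point set \<Rightarrow> bool" where
  "affine_line S \<longleftrightarrow> (\<exists>p1 p2 v1 v2. (v1, v2) \<noteq> (0, 0) \<and>
      S = {(p1 + t * v1, p2 + t * v2) | t. True})"

definition parallel :: "point set \<Rightarrow> point set \<Rightarrow> bool" where
  "parallel S T \<longleftrightarrow> (\<exists>c1 c2. T = (\<lambda>(x, y). (x + c1, y + c2)) ` S)"

definition line_arrangement :: "nat \<Rightarrow> (nat \<Rightarrow> point set) \<Rightarrow> bool" where
  "line_arrangement n L \<longleftrightarrow> (\<forall>i<n. affine_line (L i)) \<and> inj_on L {..<n}"

text \<open>Elements of A^1 are coefficient vectors c (c i = coefficient of e_i, i < n).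
  Elements of the exterior square of A^1 are represented as alternating
  matrices w k l (coefficient structure of sum over k,l of w k l e_k e_l / 2),
  i.e. e_i wedge e_j is the matrix below.\<close>
definition ewedge :: "nat \<Rightarrow> nat \<Rightarrow> nat \<Rightarrow> nat \<Rightarrow> 'r::comm_ring_1" where
  "ewedge i j = (\<lambda>k l. (if k = i \<and> l = j then 1 else 0) - (if k = j \<and> l = i then 1 else 0))"

definition wedge1 :: "nat \<Rightarrow> (nat \<Rightarrow> 'r::comm_ring_1) \<Rightarrow> (nat \<Rightarrow> 'r) \<Rightarrow> nat \<Rightarrow> nat \<Rightarrow> 'r" where
  "wedge1 n x y = (\<lambda>k l. if k < n \<and> l < n then x k * y l - x l * y k else 0)"

definition OS_gens :: "nat \<Rightarrow> (nat \<Rightarrow> point set) \<Rightarrow> (nat \<Rightarrow> nat \<Rightarrow> 'r::comm_ring_1) set" where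
  "OS_gens n L =
     {ewedge i j | i j. i < n \<and> j < n \<and> i \<noteq> j \<and> parallel (L i) (L j)}
   \<union> {(\<lambda>k l. ewedge i j k l - ewedge i m k l + ewedge j m k l) | i j m.
        i < n \<and> j < n \<and> m < n \<and> i \<noteq> j \<and> i \<noteq> m \<and> j \<noteq> m \<and>
        L i \<inter> L j \<inter> L m \<noteq> {}}"

definition OS_ideal :: "nat \<Rightarrow> (nat \<Rightarrow> point set) \<Rightarrow> (nat \<Rightarrow> nat \<Rightarrow> 'r::comm_ring_1) set" where
  "OS_ideal n L = {w. \<exists>G c. finite G \<and> G \<subseteq> OS_gens n L \<and>
       w = (\<lambda>k l. \<Sum>g\<in>G. c g * g k l)}"

definition OS_wedge_zero :: "nat \<Rightarrow> (nat \<Rightarrow> point set) \<Rightarrow> (nat \<Rightarrow> 'r::comm_ring_1) \<Rightarrow> (nat \<Rightarrow> 'r) \<Rightarrow> bool" where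
  "OS_wedge_zero n L x y \<longleftrightarrow> wedge1 n x y \<in> OS_ideal n L"

definition parallel_classes :: "nat \<Rightarrow> (nat \<Rightarrow> point set) \<Rightarrow> nat set set" where
  "parallel_classes n L = {..<n} // {(i, j). i < n \<and> j < n \<and> parallel (L i) (L j)}"

text \<open>Delta_tot on degree one: the generators of A^1(C_s) are indexed by the parallel
  classes; Delta_tot(sum b_i e_i) = sum over classes C of (sum_{i in C} b_i) e~_C.\<close>
definition Delta_tot1 :: "nat \<Rightarrow> (nat \<Rightarrow> point set) \<Rightarrow> (nat \<Rightarrow> 'r::comm_ring_1) \<Rightarrow> nat set \<Rightarrow> 'r" where
  "Delta_tot1 n L y = (\<lambda>C. if C \<in> parallel_classes n L then \<Sum>i\<in>C. y i else 0)"

end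

theory Submission
  imports Defs
begin

text \<open>Contract the second slot of the exterior square against a linear form g on A^1
  that takes equal values on parallel lines. The contraction of e_i \<wedge> e_j is g(e_j) - g(e_i),
  so it vanishes for parallel L_i, L_j and telescopes to zero on the triple relations: it
  kills the Orlik-Solomon relations. Taking g the indicator of a parallel class C, the contraction
  of \<xi> \<wedge> \<eta> is (\<Sum>a)(\<Sum>_C b) - (\<Sum>_C a)(\<Sum>b) = (\<Sum>a)(\<Sum>_C b), and \<Sum>a is a unit.\<close>

lemma parallel_refl: "parallel S S"
  unfolding parallel_def by (rule exI[of _ 0], rule exI[of _ 0]) (simp add: case_prod_beta)

lemma parallel_sym: "parallel S T \<Longrightarrow> parallel T S"
  unfolding parallel_def
proof clarify
  fix c1 c2
  show "\<exists>d1 d2. S = (\<lambda>(x, y). (x + d1, y + d2)) ` (\<lambda>(x, y). (x + c1, y + c2)) ` S"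
    by (rule exI[of _ "-c1"], rule exI[of _ "-c2"]) (simp add: image_image case_prod_beta)
qed

lemma parallel_trans: "parallel S T \<Longrightarrow> parallel T U \<Longrightarrow> parallel S U"
  unfolding parallel_def
proof clarify
  fix c1 c2 d1 d2
  show "\<exists>e1 e2. (\<lambda>(x, y). (x + d1, y + d2)) ` (\<lambda>(x, y). (x + c1, y + c2)) ` S
              = (\<lambda>(x, y). (x + e1, y + e2)) ` S"
    by (rule exI[of _ "c1 + d1"], rule exI[of _ "c2 + d2"])
       (simp add: image_image case_prod_beta add.assoc)
qed

lemma equiv_parallel_indices:
  "equiv {..<n} {(i, j). i < n \<and> j < n \<and> parallel (L i) (L j)}"
  by (rule equivI) (auto simp: refl_on_def sym_def trans_def
      intro: parallel_refl parallel_sym parallel_trans)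

lemma parallel_classes_subset:
  "C \<in> parallel_classes n L \<Longrightarrow> C \<subseteq> {..<n}"
  unfolding parallel_classes_def by (rule in_quotient_imp_subset[OF equiv_parallel_indices])

lemma parallel_classes_closed:
  assumes "C \<in> parallel_classes n L" "i < n" "j < n" "parallel (L i) (L j)"
  shows "i \<in> C \<longleftrightarrow> j \<in> C"
  using assms parallel_sym
    in_quotient_imp_closed[OF equiv_parallel_indices, of _ n L]
  unfolding parallel_classes_def by blast

definition contract :: "nat \<Rightarrow> (nat \<Rightarrow> 'r::comm_ring_1) \<Rightarrow> (nat \<Rightarrow> nat \<Rightarrow> 'r) \<Rightarrow> 'r" where
  "contract n g w = (\<Sum>k<n. \<Sum>l<n. w k l * g l)"

lemma contract_ewedge:
  assumes "i < n" "j < n"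
  shows "contract n g (ewedge i j) = g j - g i"
proof -
  have "ewedge i j k l * g l = (if l = j then (if k = i then g j else 0) else 0)
                              - (if l = i then (if k = j then g i else 0) else 0)" for k l
    by (simp add: ewedge_def left_diff_distrib)
  then have "(\<Sum>l<n. ewedge i j k l * g l) = (if k = i then g j else 0) - (if k = j then g i else 0)"
    for k
    using assms by (simp add: sum_subtractf)
  then show ?thesis
    using assms by (simp add: contract_def sum_subtractf)
qed

lemma contract_linear:
  "contract n g (\<lambda>k l. \<Sum>x\<in>G. c x * x k l) = (\<Sum>x\<in>G. c x * contract n g x)"
proof -
  have "(\<Sum>x\<in>G. c x * contract n g x) = (\<Sum>x\<in>G. \<Sum>k<n. \<Sum>l<n. c x * x k l * g l)"
    by (simp add: contract_def sum_distrib_left mult.assoc)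
  also have "\<dots> = (\<Sum>k<n. \<Sum>l<n. \<Sum>x\<in>G. c x * x k l * g l)"
    by (subst sum.swap) (rule sum.cong[OF refl], rule sum.swap)
  also have "\<dots> = contract n g (\<lambda>k l. \<Sum>x\<in>G. c x * x k l)"
    by (simp add: contract_def sum_distrib_right)
  finally show ?thesis by simp
qed

lemma contract_wedge1:
  "contract n g (wedge1 n a b)
     = (\<Sum>k<n. a k) * (\<Sum>l<n. b l * g l) - (\<Sum>l<n. a l * g l) * (\<Sum>k<n. b k)"
proof -
  have "contract n g (wedge1 n a b)
      = (\<Sum>k<n. \<Sum>l<n. a k * (b l * g l)) - (\<Sum>k<n. \<Sum>l<n. (a l * g l) * b k)"
    unfolding contract_def sum_subtractf[symmetric]
    by (intro sum.cong refl) (simp add: wedge1_def algebra_simps)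
  also have "(\<Sum>k<n. \<Sum>l<n. (a l * g l) * b k) = (\<Sum>l<n. \<Sum>k<n. (a l * g l) * b k)"
    by (rule sum.swap)
  finally show ?thesis
    by (simp add: sum_product)
qed

lemma contract_OS_gens:
  assumes "\<And>i j. i < n \<Longrightarrow> j < n \<Longrightarrow> parallel (L i) (L j) \<Longrightarrow> g i = g j"
    and "w \<in> OS_gens n L"
  shows "contract n g w = 0"
  using assms(2) unfolding OS_gens_def
proof (elim UnE CollectE exE conjE)
  fix i j
  assume "w = ewedge i j" "i < n" "j < n" "parallel (L i) (L j)"
  then show ?thesis
    using assms(1) by (simp add: contract_ewedge)
next
  fix i j m
  assume w: "w = (\<lambda>k l. ewedge i j k l - ewedge i m k l + ewedge j m k l)"
    and "i < n" "j < n" "m < n"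
  have "contract n g w
      = contract n g (ewedge i j) - contract n g (ewedge i m) + contract n g (ewedge j m)"
    unfolding w contract_def by (simp add: algebra_simps sum.distrib sum_subtractf)
  then show ?thesis
    using \<open>i < n\<close> \<open>j < n\<close> \<open>m < n\<close> by (simp add: contract_ewedge)
qed

lemma contract_OS_ideal:
  assumes "\<And>i j. i < n \<Longrightarrow> j < n \<Longrightarrow> parallel (L i) (L j) \<Longrightarrow> g i = g j"
    and "w \<in> OS_ideal n L"
  shows "contract n g w = 0"
proof -
  obtain G c where G: "finite G" "G \<subseteq> OS_gens n L"
    and w: "w = (\<lambda>k l. \<Sum>x\<in>G. c x * x k l)"
    using assms(2) unfolding OS_ideal_def by blast
  have "contract n g w = (\<Sum>x\<in>G. c x * contract n g x)"
    unfolding w by (rule contract_linear)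
  also have "\<dots> = 0"
    using G contract_OS_gens[OF assms(1)] by (intro sum.neutral) auto
  finally show ?thesis .
qed

lemma unit_mult_eq_0D:
  fixes u x :: "'a::comm_semiring_1"
  assumes "u * x = 0" "u dvd 1"
  shows "x = 0"
proof -
  obtain v where "1 = u * v"
    using assms(2) by (elim dvdE)
  then have "x = (u * v) * x"
    by simp
  also have "\<dots> = v * (u * x)"
    by (simp add: ac_simps)
  also have "\<dots> = 0"
    using assms(1) by simp
  finally show ?thesis .
qed

theorem lemma3p2:
  fixes n :: nat and L :: "nat \<Rightarrow> point set" and a b :: "nat \<Rightarrow> 'r::comm_ring_1"
  assumes "line_arrangement n L"
    and "(\<Sum>i<n. b i) = 0"
    and "(\<Sum>i<n. a i) dvd 1"
    and "OS_wedge_zero n L a b"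
  shows "Delta_tot1 n L b = (\<lambda>C. 0)"
proof
  fix C
  show "Delta_tot1 n L b C = 0"
  proof (cases "C \<in> parallel_classes n L")
    case True
    let ?g = "\<lambda>l. of_bool (l \<in> C) :: 'r"
    have "contract n ?g (wedge1 n a b) = 0"
      using assms(4) parallel_classes_closed[OF True]
      unfolding OS_wedge_zero_def by (intro contract_OS_ideal) auto
    then have "(\<Sum>k<n. a k) * (\<Sum>i\<in>C. b i) = 0"
      using assms(2) parallel_classes_subset[OF True]
      by (simp add: contract_wedge1 Int_absorb1)
    then have "(\<Sum>i\<in>C. b i) = 0"
      using assms(3) by (rule unit_mult_eq_0D)
    then show ?thesis
      using True by (simp add: Delta_tot1_def)
  qed (simp add: Delta_tot1_def)
qed

end
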